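(* Let $\alpha,\beta\in\mathbb{Z}[\mathrm{i}]$ with $|\alpha|,|\beta|>1$, and let $D_\alpha,D_\beta\subset\mathbb{Z}[\mathrm{i}]$ be finite sets containing $0$ such that every Gaussian integer has at least one $(\alpha,D_\alpha)$-expansion and at least one $(\beta,D_\beta)$-expansion. Let $(a_z)_{z\in\mathbb{Z}[\mathrm{i}]}$ be a configuration generated by a consistent DFAO $\mathcal{A}_\alpha=(S_\alpha,D_\alpha,\delta_\alpha,s_{0,\alpha},A,\tau_\alpha)$ in base $\alpha$ and by a consistent DFAO $\mathcal{A}_\beta=(S_\beta,D_\beta,\delta_\beta,s_{0,\beta},A,\tau_\beta)$ in base $\beta$. For $s\in S_\beta$ let $L_{\beta,s}=\{w\in D_\beta^*:\delta_\beta(s_{0,\beta},w)=s\}$, for $t\in S_\alpha$ let $L_{\alpha,t}=\{w\in D_\alpha^*:\delta_\alpha(s_{0,\alpha},w)=t\}$, and let $S_\infty=\{s\in S_\beta:[L_{\beta,s}]_\beta\text{ is infinite}\}$. If $\beta$ is not a root of an integer, then for every $s\in S_\infty$ there exists a state $t\in S_\alpha$ and three non-collinear Gaussian integers $x,y,z\in[L_{\beta,s}]_\beta\cap[L_{\alpha,t}]_\alpha$.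
   Context: For $\gamma\in\mathbb{Z}[\mathrm{i}]$ and a word $w=w_{n-1}\cdots w_0$, $[w]_\gamma=\sum_{j}w_j\gamma^j$, and $[L]_\gamma=\{[w]_\gamma:w\in L\}$; $w$ is a $(\gamma,D)$-expansion of $z$ if $[w]_\gamma=z$. A DFAO $(S,D,\delta,s_0,A,\tau)$ has finite state set $S$, transition map $\delta:S\times D\to S$ extended to words by $\delta(s,wa)=\delta(\delta(s,w),a)$, initial state $s_0$, output $\tau:S\to A$; it generates $(a_z)$ in base $\gamma$ and is consistent if $a_z=\tau(\delta(s_0,w))$ for every $w$ with $[w]_\gamma=z$. $\beta$ is a root of an integer if $\beta^n\in\mathbb{Z}$ for some $n\ge1$. *)

theory Defs
  imports "HOL-Analysis.Analysis"
begin

definition gauss_int :: "complex \<Rightarrow> bool" where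
  "gauss_int z \<longleftrightarrow> Re z \<in> \<int> \<and> Im z \<in> \<int>"

text \<open>A word w = w_{n-1} ... w_0 is the list [w_{n-1}, ..., w_0]
(most significant digit first); its value is sum_j w_j gamma^j (Horner).\<close>
definition word_val :: "complex \<Rightarrow> complex list \<Rightarrow> complex" where
  "word_val \<gamma> w = foldl (\<lambda>acc d. acc * \<gamma> + d) 0 w"

definition run :: "('s \<Rightarrow> complex \<Rightarrow> 's) \<Rightarrow> 's \<Rightarrow> complex list \<Rightarrow> 's" where
  "run \<delta> s w = foldl \<delta> s w"

definition dfao :: "'s set \<Rightarrow> complex set \<Rightarrow> ('s \<Rightarrow> complex \<Rightarrow> 's) \<Rightarrow> 's \<Rightarrow> 'o set \<Rightarrow> ('s \<Rightarrow> 'o) \<Rightarrow> bool" where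
  "dfao S D \<delta> s0 A \<tau> \<longleftrightarrow> finite S \<and> finite D \<and> s0 \<in> S \<and>
     (\<forall>s\<in>S. \<forall>d\<in>D. \<delta> s d \<in> S) \<and> (\<forall>s\<in>S. \<tau> s \<in> A)"

definition consistently_generates ::
  "complex \<Rightarrow> complex set \<Rightarrow> ('s \<Rightarrow> complex \<Rightarrow> 's) \<Rightarrow> 's \<Rightarrow> ('s \<Rightarrow> 'o) \<Rightarrow> (complex \<Rightarrow> 'o) \<Rightarrow> bool" where
  "consistently_generates \<gamma> D \<delta> s0 \<tau> a \<longleftrightarrow>
     (\<forall>w\<in>lists D. a (word_val \<gamma> w) = \<tau> (run \<delta> s0 w))"

definition all_expandable :: "complex \<Rightarrow> complex set \<Rightarrow> bool" where
  "all_expandable \<gamma> D \<longleftrightarrow> (\<forall>z. gauss_int z \<longrightarrow> (\<exists>w\<in>lists D. word_val \<gamma> w = z))"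

definition lang :: "complex set \<Rightarrow> ('s \<Rightarrow> complex \<Rightarrow> 's) \<Rightarrow> 's \<Rightarrow> 's \<Rightarrow> complex list set" where
  "lang D \<delta> s0 s = {w \<in> lists D. run \<delta> s0 w = s}"

definition root_of_integer :: "complex \<Rightarrow> bool" where
  "root_of_integer b \<longleftrightarrow> (\<exists>n::nat. n \<ge> 1 \<and> b ^ n \<in> \<int>)"

end

theory Submission
  imports Defs
begin

(* Since [L_(beta,s)]_beta is infinite, some value in it has a shortest expansion in L_(beta,s) of
   length at least |S_beta|. Pumping a loop v of the beta-automaton inside that word yields values
   P_k = [u v^k w]_beta in [L_(beta,s)]_beta of the form b + c gamma^k with gamma = beta^|v|, and c is
   nonzero because minimality of the word forces P_0 <> P_1. Colouring P_k by the state the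
   alpha-automaton reaches on one of its alpha-expansions, finitely many colours give k < k' and n > 0
   with P_k, P_(k+n), P_k', P_(k'+n) all of one colour t. If both triples through P_k and P_(k+n)
   were collinear, the segments P_k P_(k+n) and P_k' P_(k'+n) would be parallel, so gamma^(k'-k)
   would be real; a real Gaussian integer lies in Z, contradicting that beta is not a root of an
   integer. *)

lemma word_val_Nil [simp]: "word_val \<gamma> [] = 0"
  by (simp add: word_val_def)

lemma word_val_snoc [simp]: "word_val \<gamma> (xs @ [d]) = word_val \<gamma> xs * \<gamma> + d"
  by (simp add: word_val_def)

lemma word_val_append: "word_val \<gamma> (xs @ ys) = word_val \<gamma> xs * \<gamma> ^ length ys + word_val \<gamma> ys"
  by (induction ys rule: rev_induct) (simp_all flip: append_assoc add: algebra_simps)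

lemma word_val_concat_replicate:
  "word_val \<gamma> (concat (replicate k v)) * (\<gamma> ^ length v - 1) = word_val \<gamma> v * ((\<gamma> ^ length v) ^ k - 1)"
proof (induction k)
  case (Suc k)
  have "concat (replicate (Suc k) v) = concat (replicate k v) @ v"
    by (simp flip: replicate_append_same)
  with Suc.IH show ?case
    by (simp add: word_val_append algebra_simps)
qed simp

lemma word_val_pumped:
  fixes \<gamma> :: complex
  assumes "\<gamma> ^ length v \<noteq> 1"
  obtains a c where "\<And>k. word_val \<gamma> (u @ concat (replicate k v) @ w) = a + c * (\<gamma> ^ length v) ^ k"
proof
  let ?g = "\<gamma> ^ length v" and ?B = "\<gamma> ^ length w"
  fix k
  have "\<gamma> ^ length (concat (replicate k v)) = ?g ^ k"
    by (simp add: length_concat sum_list_replicate mult.commute flip: power_mult)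
  then have "word_val \<gamma> (u @ concat (replicate k v) @ w)
      = (word_val \<gamma> u * ?g ^ k + word_val \<gamma> (concat (replicate k v))) * ?B + word_val \<gamma> w"
    by (simp add: word_val_append power_add algebra_simps)
  also have "word_val \<gamma> (concat (replicate k v)) = word_val \<gamma> v * (?g ^ k - 1) / (?g - 1)"
    using word_val_concat_replicate[of \<gamma> k v] assms by (simp add: eq_divide_eq)
  also have "(word_val \<gamma> u * ?g ^ k + word_val \<gamma> v * (?g ^ k - 1) / (?g - 1)) * ?B + word_val \<gamma> w
      = (word_val \<gamma> w - word_val \<gamma> v * ?B / (?g - 1))
        + (word_val \<gamma> u + word_val \<gamma> v / (?g - 1)) * ?B * ?g ^ k"
    using assms by (simp add: divide_simps) (simp add: algebra_simps)
  finally show "word_val \<gamma> (u @ concat (replicate k v) @ w) = \<dots>" .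
qed

lemma run_append: "run \<delta> s (xs @ ys) = run \<delta> (run \<delta> s xs) ys"
  by (simp add: run_def)

lemma run_closed:
  assumes "\<forall>q\<in>S. \<forall>d\<in>D. \<delta> q d \<in> S" "s \<in> S" "w \<in> lists D"
  shows "run \<delta> s w \<in> S"
  using assms(2,3) by (induction w arbitrary: s) (auto simp: run_def assms(1))

lemma run_concat_replicate_loop:
  "run \<delta> q v = q \<Longrightarrow> run \<delta> q (concat (replicate k v)) = q"
  by (induction k) (simp_all add: run_append, simp add: run_def)

lemma not_inj_on_obtain_less:
  fixes f :: "'a::linorder \<Rightarrow> 'b"
  assumes "\<not> inj_on f A"
  obtains i j where "i \<in> A" "j \<in> A" "i < j" "f i = f j"
  using assms unfolding inj_on_def by (metis linorder_neqE)

lemma run_pumping: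
  assumes "finite S" "s0 \<in> S" "\<forall>q\<in>S. \<forall>d\<in>D. \<delta> q d \<in> S"
    and "p \<in> lang D \<delta> s0 s" "card S \<le> length p"
  obtains u v w where "p = u @ v @ w" "v \<noteq> []"
    "\<And>k. u @ concat (replicate k v) @ w \<in> lang D \<delta> s0 s"
proof -
  have p: "p \<in> lists D" "run \<delta> s0 p = s"
    using assms(4) by (auto simp: lang_def)
  let ?st = "\<lambda>i. run \<delta> s0 (take i p)"
  have "take i p \<in> lists D" for i
    using p(1) by (meson in_lists_conv_set in_set_takeD)
  then have "?st ` {0..card S} \<subseteq> S"
    by (intro image_subsetI run_closed[OF assms(3,2)])
  then have "card (?st ` {0..card S}) < card {0..card S}"
    using card_mono[OF assms(1)] by (simp add: less_Suc_eq_le)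
  then have "\<not> inj_on ?st {0..card S}"
    by (rule pigeonhole)
  then obtain i j where ij: "i < j" "j \<le> card S" "?st i = ?st j"
    by (auto elim: not_inj_on_obtain_less)
  define u v w where "u = take i p" and "v = drop i (take j p)" and "w = drop j p"
  have "take i (take j p) = u"
    using ij(1) by (simp add: u_def)
  then have uv: "take j p = u @ v"
    by (metis v_def append_take_drop_id)
  then have uvw: "p = u @ v @ w"
    by (metis w_def append_assoc append_take_drop_id)
  show thesis
  proof
    show "p = u @ v @ w" by (fact uvw)
    show "v \<noteq> []"
      using ij assms(5) by (simp add: v_def)
    have loop: "run \<delta> (run \<delta> s0 u) v = run \<delta> s0 u"
      by (metis ij(3) uv u_def run_append)
    fix k
    have "u @ concat (replicate k v) @ w \<in> lists D"
      using p(1) unfolding uvw by (auto simp: in_lists_conv_set)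
    moreover have "run \<delta> s0 (u @ concat (replicate k v) @ w) = s"
      using p(2) loop unfolding uvw by (simp add: run_append run_concat_replicate_loop)
    ultimately show "u @ concat (replicate k v) @ w \<in> lang D \<delta> s0 s"
      by (simp add: lang_def)
  qed
qed

lemma infinite_image_long_shortest_preimage:
  assumes "finite D" "L \<subseteq> lists D" "infinite (f ` L)"
  obtains p where "p \<in> L" "N \<le> length p" "\<And>q. q \<in> L \<Longrightarrow> f q = f p \<Longrightarrow> length p \<le> length q"
proof -
  let ?short = "{w \<in> L. length w < N}"
  have "?short \<subseteq> {w. set w \<subseteq> D \<and> length w \<le> N}"
    using assms(2) by (auto simp: in_lists_conv_set)
  then have "finite (f ` ?short)"
    using finite_lists_length_le[OF assms(1)] by (intro finite_imageI) (rule finite_subset)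
  then have "\<not> f ` L \<subseteq> f ` ?short"
    using assms(3) finite_subset by blast
  then obtain p0 where p0: "p0 \<in> L" "f p0 \<notin> f ` ?short"
    by blast
  obtain p where p: "p \<in> L \<and> f p = f p0" and shortest: "\<forall>q. q \<in> L \<and> f q = f p0 \<longrightarrow> length p \<le> length q"
    using ex_has_least_nat[of "\<lambda>q. q \<in> L \<and> f q = f p0" p0 length] p0(1) by blast
  have "N \<le> length p"
  proof (rule ccontr)
    assume "\<not> N \<le> length p"
    with p have "f p0 \<in> f ` ?short"
      by (metis (mono_tags, lifting) image_eqI mem_Collect_eq not_le)
    with p0(2) show False ..
  qed
  with p shortest show thesis
    by (intro that) auto
qed

lemma infinite_values_contain_geometric_orbit:
  fixes \<beta> :: complex
  assumes "finite D" "finite S" "s0 \<in> S" "\<forall>q\<in>S. \<forall>d\<in>D. \<delta> q d \<in> S"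
    and "infinite (word_val \<beta> ` lang D \<delta> s0 s)" "\<And>m. 0 < m \<Longrightarrow> \<beta> ^ m \<noteq> 1"
  obtains b c m where "\<And>k. b + c * (\<beta> ^ m) ^ k \<in> word_val \<beta> ` lang D \<delta> s0 s" "c \<noteq> 0" "0 < m"
proof -
  obtain p where p: "p \<in> lang D \<delta> s0 s" "card S \<le> length p"
    and shortest: "\<And>q. q \<in> lang D \<delta> s0 s \<Longrightarrow> word_val \<beta> q = word_val \<beta> p \<Longrightarrow> length p \<le> length q"
    using infinite_image_long_shortest_preimage[OF assms(1) _ assms(5)] by (auto simp: lang_def)
  obtain u v w where uvw: "p = u @ v @ w" "v \<noteq> []"
    and pumped: "\<And>k. u @ concat (replicate k v) @ w \<in> lang D \<delta> s0 s"
    using run_pumping[OF assms(2-4) p] by blast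
  obtain b c where P: "\<And>k. word_val \<beta> (u @ concat (replicate k v) @ w) = b + c * (\<beta> ^ length v) ^ k"
    using word_val_pumped[of \<beta> v u w] assms(6) uvw(2) by blast
  have "word_val \<beta> (u @ w) \<noteq> word_val \<beta> p"
    using shortest[OF pumped[of 0]] uvw by auto
  then have "c \<noteq> 0"
    using P[of 0] P[of 1] uvw(1) by auto
  moreover have "b + c * (\<beta> ^ length v) ^ k \<in> word_val \<beta> ` lang D \<delta> s0 s" for k
    using pumped[of k] by (auto simp flip: P)
  ultimately show thesis
    using uvw(2) by (intro that[where m = "length v"]) auto
qed

lemma gauss_int_add: "gauss_int a \<Longrightarrow> gauss_int b \<Longrightarrow> gauss_int (a + b)"
  by (auto simp: gauss_int_def)

lemma gauss_int_mult: "gauss_int a \<Longrightarrow> gauss_int b \<Longrightarrow> gauss_int (a * b)"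
  by (auto simp: gauss_int_def)

lemma gauss_int_power: "gauss_int a \<Longrightarrow> gauss_int (a ^ n)"
  by (induction n) (auto intro: gauss_int_mult simp: gauss_int_def)

lemma gauss_int_Reals_imp_Ints:
  assumes "gauss_int z" "z \<in> \<real>"
  shows "z \<in> \<int>"
proof -
  obtain i where "Re z = of_int i"
    using assms(1) by (auto simp: gauss_int_def elim: Ints_cases)
  with assms(2) have "z = of_int i"
    by (simp add: complex_eq_iff complex_is_Real_iff)
  then show ?thesis
    by simp
qed

lemma not_root_of_integer_power_not_real:
  assumes "gauss_int \<beta>" "\<not> root_of_integer \<beta>" "0 < m"
  shows "\<beta> ^ m \<notin> \<real>"
proof
  assume "\<beta> ^ m \<in> \<real>"
  then have "\<beta> ^ m \<in> \<int>"
    by (intro gauss_int_Reals_imp_Ints gauss_int_power assms(1))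
  with assms(2,3) show False
    by (auto simp: root_of_integer_def)
qed

lemma gauss_int_word_val:
  assumes "gauss_int \<gamma>" "set w \<subseteq> {z. gauss_int z}"
  shows "gauss_int (word_val \<gamma> w)"
  using assms(2)
proof (induction w rule: rev_induct)
  case Nil
  then show ?case
    by (simp add: gauss_int_def)
next
  case (snoc d w)
  then show ?case
    by (auto intro: gauss_int_add gauss_int_mult assms(1))
qed

lemma expansion_reaches_state:
  assumes "all_expandable \<gamma> D" "s0 \<in> S" "\<forall>q\<in>S. \<forall>d\<in>D. \<delta> q d \<in> S" "gauss_int z"
  obtains t where "t \<in> S" "z \<in> word_val \<gamma> ` lang D \<delta> s0 t"
proof -
  obtain w where "w \<in> lists D" "word_val \<gamma> w = z"
    using assms(1,4) unfolding all_expandable_def by blast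
  then show thesis
    by (intro that[of "run \<delta> s0 w"] run_closed[OF assms(3,2)]) (auto simp: lang_def)
qed

lemma finite_range_repeat_in_window:
  fixes c :: "nat \<Rightarrow> 'a"
  assumes "finite (range c)"
  obtains a d where "m \<le> a" "0 < d" "a + d \<le> m + card (range c)" "c (a + d) = c a"
proof -
  let ?W = "{m..m + card (range c)}"
  have "card (c ` ?W) < card ?W"
    using card_mono[OF assms] by (simp add: image_subsetI less_Suc_eq_le)
  then have "\<not> inj_on c ?W"
    by (rule pigeonhole)
  then obtain i j where "i \<in> ?W" "j \<in> ?W" "i < j" "c i = c j"
    by (rule not_inj_on_obtain_less)
  then show thesis
    by (intro that[of i "j - i"]) auto
qed

(* Every window of card (range c) + 1 consecutive positions contains a repeated colour at a short
   gap; two windows with the same colour and gap give the four positions. *)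
lemma finite_range_two_equal_gaps:
  fixes c :: "nat \<Rightarrow> 'a"
  assumes "finite (range c)"
  obtains k k' n where "k < k'" "0 < n" "c (k + n) = c k" "c k' = c k" "c (k' + n) = c k"
proof -
  let ?N = "card (range c)"
  have "\<forall>j. \<exists>a d. j * Suc ?N \<le> a \<and> 0 < d \<and> a + d \<le> j * Suc ?N + ?N \<and> c (a + d) = c a"
    by (metis finite_range_repeat_in_window[OF assms])
  then obtain a d where ad: "\<And>j. j * Suc ?N \<le> a j" "\<And>j. 0 < d j"
      "\<And>j. a j + d j \<le> j * Suc ?N + ?N" "\<And>j. c (a j + d j) = c (a j)"
    by metis
  let ?tag = "\<lambda>j. (c (a j), d j)"
  have "d j \<le> ?N" for j
    using ad(1,3)[of j] by linarith
  then have "range ?tag \<subseteq> range c \<times> {..?N}"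
    by auto
  then have "finite (range ?tag)"
    using assms by (meson finite_SigmaI finite_atMost finite_subset)
  then have "\<not> inj ?tag"
    by (metis finite_imageD infinite_UNIV_nat)
  then obtain j j' where jj: "j < j'" "c (a j) = c (a j')" "d j = d j'"
    by (auto elim: not_inj_on_obtain_less)
  have "a j < Suc j * Suc ?N"
    using ad(2,3)[of j] by simp
  also have "\<dots> \<le> a j'"
    using jj(1) ad(1)[of j'] by (meson Suc_leI le_trans mult_le_mono1)
  finally show thesis
    using jj ad(2) ad(4)[of j] ad(4)[of j'] by (intro that[of "a j" "a j'" "d j"]) simp_all
qed

lemma collinear_imp_collinear_differences:
  assumes "collinear S" "a \<in> S" "b \<in> S" "c \<in> S" "d \<in> S"
  shows "collinear {0, b - a, d - c}"
proof -
  obtain u where u: "\<forall>x\<in>S. \<forall>y\<in>S. \<exists>t. x - y = t *\<^sub>R u"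
    using assms(1) unfolding collinear_def by blast
  obtain t1 t2 where "b - a = t1 *\<^sub>R u" "d - c = t2 *\<^sub>R u"
    using u assms(2-5) by meson
  then show ?thesis
    unfolding collinear_lemma by (cases "t1 = 0") (auto intro!: exI[of _ "t2 / t1"])
qed

lemma geometric_orbit_not_collinear:
  fixes a c \<gamma> :: complex
  assumes P: "\<And>j. P j = a + c * \<gamma> ^ j"
    and "c \<noteq> 0" "\<And>m. 0 < m \<Longrightarrow> \<gamma> ^ m \<notin> \<real>" "k < k'" "0 < n"
  shows "\<not> collinear {P k, P (k + n), P k'} \<or> \<not> collinear {P k, P (k + n), P (k' + n)}"
proof (rule ccontr)
  assume both: "\<not> ?thesis"
  have "\<gamma> ^ n \<noteq> 1" "\<gamma> \<noteq> 0"
    using assms(3)[OF assms(5)] assms(3)[of 1] by auto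
  have step: "P (j + n) - P j = c * (\<gamma> ^ n - 1) * \<gamma> ^ j" for j
    by (simp add: P power_add algebra_simps)
  then have "P k \<noteq> P (k + n)"
    using \<open>\<gamma> ^ n \<noteq> 1\<close> \<open>\<gamma> \<noteq> 0\<close> assms(2) by (metis diff_self mult_eq_0_iff power_eq_0_iff right_minus_eq)
  with both have "collinear {P k, P (k + n), P k', P (k' + n)}"
    by (simp add: collinear_4_3)
  then have "collinear {0, P (k + n) - P k, P (k' + n) - P k'}"
    by (rule collinear_imp_collinear_differences) auto
  then have "(P (k' + n) - P k') / (P (k + n) - P k) \<in> \<real>"
    by (simp add: collinear_iff_Reals)
  also have "(P (k' + n) - P k') / (P (k + n) - P k) = \<gamma> ^ (k' - k)"
    using \<open>\<gamma> ^ n \<noteq> 1\<close> \<open>\<gamma> \<noteq> 0\<close> assms(2,4)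
    by (simp add: step power_diff)
  finally show False
    using assms(3,4) by simp
qed

lemma finite_colouring_geometric_orbit_noncollinear:
  fixes b c \<gamma> :: complex
  assumes "c \<noteq> 0" "\<And>m. 0 < m \<Longrightarrow> \<gamma> ^ m \<notin> \<real>" "finite (range col)"
  obtains i j l where "\<not> collinear {b + c * \<gamma> ^ i, b + c * \<gamma> ^ j, b + c * \<gamma> ^ l}"
    "col j = col i" "col l = col i"
proof -
  obtain k k' n where gaps: "k < k'" "0 < n" "col (k + n) = col k" "col k' = col k" "col (k' + n) = col k"
    using finite_range_two_equal_gaps[OF assms(3)] by blast
  have "\<not> collinear {b + c * \<gamma> ^ k, b + c * \<gamma> ^ (k + n), b + c * \<gamma> ^ k'}
      \<or> \<not> collinear {b + c * \<gamma> ^ k, b + c * \<gamma> ^ (k + n), b + c * \<gamma> ^ (k' + n)}"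
    by (rule geometric_orbit_not_collinear[where P = "\<lambda>j. b + c * \<gamma> ^ j"]) (use assms(1,2) gaps in auto)
  then show thesis
    using that[where i = k and j = "k + n" and l = k'] that[where i = k and j = "k + n" and l = "k' + n"] gaps(3-5)
    by blast
qed

theorem lemma3p4:
  fixes \<alpha> \<beta> :: complex
    and D\<alpha> D\<beta> :: "complex set"
    and S\<alpha> :: "'sa set" and \<delta>\<alpha> :: "'sa \<Rightarrow> complex \<Rightarrow> 'sa" and s0\<alpha> :: 'sa and \<tau>\<alpha> :: "'sa \<Rightarrow> 'o"
    and S\<beta> :: "'sb set" and \<delta>\<beta> :: "'sb \<Rightarrow> complex \<Rightarrow> 'sb" and s0\<beta> :: 'sb and \<tau>\<beta> :: "'sb \<Rightarrow> 'o"
    and A :: "'o set" and a :: "complex \<Rightarrow> 'o"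
  assumes "gauss_int \<alpha>" "gauss_int \<beta>" "cmod \<alpha> > 1" "cmod \<beta> > 1"
    and "finite D\<alpha>" "finite D\<beta>" "D\<alpha> \<subseteq> {z. gauss_int z}" "D\<beta> \<subseteq> {z. gauss_int z}"
    and "0 \<in> D\<alpha>" "0 \<in> D\<beta>"
    and "all_expandable \<alpha> D\<alpha>" "all_expandable \<beta> D\<beta>"
    and "dfao S\<alpha> D\<alpha> \<delta>\<alpha> s0\<alpha> A \<tau>\<alpha>" "dfao S\<beta> D\<beta> \<delta>\<beta> s0\<beta> A \<tau>\<beta>"
    and "consistently_generates \<alpha> D\<alpha> \<delta>\<alpha> s0\<alpha> \<tau>\<alpha> a"
    and "consistently_generates \<beta> D\<beta> \<delta>\<beta> s0\<beta> \<tau>\<beta> a"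
    and "\<not> root_of_integer \<beta>"
  shows "\<forall>s\<in>{s \<in> S\<beta>. infinite (word_val \<beta> ` lang D\<beta> \<delta>\<beta> s0\<beta> s)}.
           \<exists>t\<in>S\<alpha>. \<exists>x y z.
             x \<in> word_val \<beta> ` lang D\<beta> \<delta>\<beta> s0\<beta> s \<inter> word_val \<alpha> ` lang D\<alpha> \<delta>\<alpha> s0\<alpha> t \<and>
             y \<in> word_val \<beta> ` lang D\<beta> \<delta>\<beta> s0\<beta> s \<inter> word_val \<alpha> ` lang D\<alpha> \<delta>\<alpha> s0\<alpha> t \<and>
             z \<in> word_val \<beta> ` lang D\<beta> \<delta>\<beta> s0\<beta> s \<inter> word_val \<alpha> ` lang D\<alpha> \<delta>\<alpha> s0\<alpha> t \<and>
             \<not> collinear {x, y, z}"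
proof (intro ballI)
  let ?L\<alpha> = "\<lambda>t. word_val \<alpha> ` lang D\<alpha> \<delta>\<alpha> s0\<alpha> t" and ?L\<beta> = "\<lambda>s. word_val \<beta> ` lang D\<beta> \<delta>\<beta> s0\<beta> s"
  fix s
  assume "s \<in> {s \<in> S\<beta>. infinite (?L\<beta> s)}"
  then have "infinite (?L\<beta> s)"
    by simp
  have dfa: "finite S\<alpha>" "s0\<alpha> \<in> S\<alpha>" "\<forall>q\<in>S\<alpha>. \<forall>d\<in>D\<alpha>. \<delta>\<alpha> q d \<in> S\<alpha>"
    and dfb: "finite S\<beta>" "s0\<beta> \<in> S\<beta>" "\<forall>q\<in>S\<beta>. \<forall>d\<in>D\<beta>. \<delta>\<beta> q d \<in> S\<beta>"
    using assms(13,14) by (auto simp: dfao_def)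
  have powers: "\<beta> ^ m \<notin> \<real>" if "0 < m" for m
    using not_root_of_integer_power_not_real[OF assms(2,17) that] .
  have "\<beta> ^ m \<noteq> 1" if "0 < m" for m
    using powers[OF that] by auto
  with \<open>infinite (?L\<beta> s)\<close> obtain b c m
    where orbit: "\<And>k. b + c * (\<beta> ^ m) ^ k \<in> ?L\<beta> s" and "c \<noteq> 0" "0 < m"
    using infinite_values_contain_geometric_orbit[OF assms(6) dfb] by metis
  have "gauss_int z" if "z \<in> ?L\<beta> s" for z
    using that assms(8) by (auto simp: lang_def in_lists_conv_set intro!: gauss_int_word_val assms(2))
  then have "\<forall>k. \<exists>t. t \<in> S\<alpha> \<and> b + c * (\<beta> ^ m) ^ k \<in> ?L\<alpha> t"
    using expansion_reaches_state[OF assms(11) dfa(2,3)] orbit by metis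
  then obtain col where col: "\<And>k. col k \<in> S\<alpha>" "\<And>k. b + c * (\<beta> ^ m) ^ k \<in> ?L\<alpha> (col k)"
    by metis
  have "(\<beta> ^ m) ^ j \<notin> \<real>" if "0 < j" for j
    using powers \<open>0 < m\<close> that by (simp flip: power_mult)
  moreover have "finite (range col)"
    using col(1) dfa(1) by (meson finite_subset image_subsetI)
  ultimately obtain i j l where "\<not> collinear {b + c * (\<beta> ^ m) ^ i, b + c * (\<beta> ^ m) ^ j, b + c * (\<beta> ^ m) ^ l}"
    and "col j = col i" "col l = col i"
    by (rule finite_colouring_geometric_orbit_noncollinear[OF \<open>c \<noteq> 0\<close>])
  then show "\<exists>t\<in>S\<alpha>. \<exists>x y z. x \<in> ?L\<beta> s \<inter> ?L\<alpha> t \<and> y \<in> ?L\<beta> s \<inter> ?L\<alpha> t \<and> z \<in> ?L\<beta> s \<inter> ?L\<alpha> t \<and> \<not> collinear {x, y, z}"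
    using orbit[of i] orbit[of j] orbit[of l] col(2)[of i] col(2)[of j] col(2)[of l] col(1)[of i]
    by (metis IntI)
qed

end
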